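(* Let $R$ be a commutative ring of characteristic $2$ and $M=\begin{pmatrix} a&b\\ c&d\end{pmatrix}$ with $a,b,c,d\in R$. Put $t=a+d$. Then for all integers $s\ge0$, \[M^{2^s}=\begin{pmatrix} a^{2^s}+\sum_{i=0}^{s-1}b^{2^i}c^{2^i}t^{2^s-2^{i+1}} & bt^{2^s-1}\\ ct^{2^s-1} & d^{2^s}+\sum_{i=0}^{s-1}b^{2^i}c^{2^i}t^{2^s-2^{i+1}}\end{pmatrix}.\]
   Context: A unital ring has characteristic $2$ if $1+1=0$ in it. *)

theory Defs
  imports "HOL-Analysis.Analysis"
begin

text \<open>Matrix power with respect to matrix multiplication (not the componentwise power).\<close>
primrec matrix_pow :: "'a::semiring_1 ^'n^'n \<Rightarrow> nat \<Rightarrow> 'a^'n^'n" where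
  "matrix_pow A 0 = mat 1"
| "matrix_pow A (Suc k) = A ** matrix_pow A k"

definition mat2 :: "'a \<Rightarrow> 'a \<Rightarrow> 'a \<Rightarrow> 'a \<Rightarrow> 'a^2^2" where
  "mat2 a b c d = (\<chi> i j. if i = 1 then (if j = 1 then a else b) else (if j = 1 then c else d))"

end

theory Submission
  imports Defs
begin

text \<open>
  In characteristic 2, squaring a 2x2 matrix whose diagonal entries are shifted by a common
  S gives a matrix of the same shape: the off-diagonal entries get multiplied by the trace
  x + w, the two copies of S cancelling, and the shift becomes S^2 + yz. Applied to the
  matrix claimed for M^(2^s), with n = 2^s, the Frobenius map turns a^n + d^n into t^n, and
  S^2 + bc t^(2n-2) is the sum claimed for s + 1 because the square of a sum is the sum of
  the squares.
\<close>

lemma add_self_eq_0_char_2: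
  fixes x :: "'a::ring_1"
  assumes "(1::'a) + 1 = 0"
  shows "x + x = 0"
proof -
  have "x + x = (1 + 1) * x" by (simp only: distrib_right mult_1)
  with assms show ?thesis by simp
qed

lemma power2_add_char_2:
  fixes x y :: "'a::comm_ring_1"
  assumes "(1::'a) + 1 = 0"
  shows "(x + y)^2 = x^2 + y^2"
proof -
  have "(x + y)^2 = x^2 + y^2 + (x*y + x*y)" by (simp add: power2_eq_square algebra_simps)
  with add_self_eq_0_char_2[OF assms] show ?thesis by simp
qed

lemma power2_sum_char_2:
  fixes f :: "'b \<Rightarrow> 'a::comm_ring_1"
  assumes "(1::'a) + 1 = 0"
  shows "(sum f A)^2 = (\<Sum>i\<in>A. (f i)^2)"
  by (induction A rule: infinite_finite_induct) (simp_all add: power2_add_char_2[OF assms])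

lemma power_two_power_add_char_2:
  fixes x y :: "'a::comm_ring_1"
  assumes "(1::'a) + 1 = 0"
  shows "(x + y)^(2^s) = x^(2^s) + y^(2^s)"
proof (induction s)
  case (Suc s)
  have "(x + y)^(2^Suc s) = ((x + y)^(2^s))^2" by (simp add: mult.commute flip: power_mult)
  also have "\<dots> = (x^(2^s))^2 + (y^(2^s))^2" by (simp add: Suc power2_add_char_2[OF assms])
  finally show ?case by (simp add: mult.commute flip: power_mult)
qed simp

lemma matrix_pow_add: "matrix_pow A (m + n) = matrix_pow A m ** matrix_pow A n"
  by (induction m) (simp_all add: matrix_mul_lid matrix_mul_assoc)

lemma matrix_pow_1: "matrix_pow A 1 = A"
  by (simp add: matrix_mul_rid)

lemma mat2_mult:
  "mat2 a b c d ** mat2 a' b' c' d' =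
    mat2 (a*a' + b*c') (a*b' + b*d') (c*a' + d*c') (c*b' + d*d')"
  by (simp add: vec_eq_iff forall_2 mat2_def matrix_matrix_mult_def sum_2)

lemma mat2_square_char_2:
  fixes x y z w S :: "'a::comm_ring_1"
  assumes char2: "(1::'a) + 1 = 0"
  defines "M \<equiv> mat2 (x + S) y z (w + S)"
  shows "M ** M = mat2 (x^2 + (S^2 + y*z)) (y * (x + w)) (z * (x + w)) (w^2 + (S^2 + y*z))"
proof -
  have "(x + S) * y + y * (w + S) = y * (x + w) + y * (S + S)"
    "z * (x + S) + (w + S) * z = z * (x + w) + z * (S + S)"
    by (simp_all add: algebra_simps)
  moreover have "(x + S) * (x + S) = x^2 + S^2" "(w + S) * (w + S) = w^2 + S^2"
    by (simp_all flip: power2_eq_square add: power2_add_char_2[OF char2])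
  ultimately show ?thesis
    by (simp add: M_def mat2_mult add_self_eq_0_char_2[OF char2] algebra_simps)
qed

lemma power_two_power_diff_square:
  fixes x :: "'a::monoid_mult"
  shows "(x^(2^s - 2^i))^2 = x^(2^Suc s - 2^Suc i)"
  by (simp flip: power_mult add: mult.commute diff_mult_distrib2)

lemma diagonal_sum_Suc_char_2:
  fixes b c t :: "'a::comm_ring_1"
  assumes "(1::'a) + 1 = 0"
  shows "(\<Sum>i<Suc s. b^(2^i) * c^(2^i) * t^(2^Suc s - 2^(i+1))) =
    (\<Sum>i<s. b^(2^i) * c^(2^i) * t^(2^s - 2^(i+1)))^2 + b * c * (t^(2^s - 1))^2"
proof -
  have "(b^(2^i) * c^(2^i) * t^(2^s - 2^(i+1)))^2 =
      b^(2^Suc i) * c^(2^Suc i) * t^(2^Suc s - 2^(Suc i + 1))" for i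
    using power_two_power_diff_square[of t s "Suc i"]
    by (simp add: power_mult_distrib mult.commute flip: power_mult)
  moreover have "t^(2^Suc s - 2^(0+1)) = (t^(2^s - 1))^2"
    using power_two_power_diff_square[of t s 0] by simp
  ultimately show ?thesis
    unfolding sum.lessThan_Suc_shift power2_sum_char_2[OF assms] by (simp add: add.commute)
qed

theorem lemma4p2:
  fixes a b c d :: "'a::comm_ring_1" and s :: nat
  assumes char2: "(1::'a) + 1 = 0"
  defines "t \<equiv> a + d"
  shows "matrix_pow (mat2 a b c d) (2^s) =
    mat2 (a^(2^s) + (\<Sum>i<s. b^(2^i) * c^(2^i) * t^(2^s - 2^(i+1))))
         (b * t^(2^s - 1))
         (c * t^(2^s - 1))
         (d^(2^s) + (\<Sum>i<s. b^(2^i) * c^(2^i) * t^(2^s - 2^(i+1))))"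
proof (induction s)
  case 0
  show ?case by (simp add: matrix_pow_1)
next
  case (Suc s)
  let ?n = "2^s :: nat" and ?T = "t^(2^s - 1)"
  let ?S = "\<Sum>i<s. b^(2^i) * c^(2^i) * t^(2^s - 2^(i+1))"
  have "matrix_pow (mat2 a b c d) (2^Suc s) =
      matrix_pow (mat2 a b c d) ?n ** matrix_pow (mat2 a b c d) ?n"
    by (simp add: mult_2 flip: matrix_pow_add)
  also have "\<dots> = mat2 ((a^?n)^2 + (?S^2 + b*?T * (c*?T))) (b*?T * (a^?n + d^?n))
      (c*?T * (a^?n + d^?n)) ((d^?n)^2 + (?S^2 + b*?T * (c*?T)))"
    unfolding Suc.IH by (rule mat2_square_char_2[OF char2])
  also have "\<dots> = mat2 (a^(2^Suc s) + (\<Sum>i<Suc s. b^(2^i) * c^(2^i) * t^(2^Suc s - 2^(i+1))))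
      (b * (?T * t^?n)) (c * (?T * t^?n))
      (d^(2^Suc s) + (\<Sum>i<Suc s. b^(2^i) * c^(2^i) * t^(2^Suc s - 2^(i+1))))"
  proof -
    have "(x^?n)^2 = x^(2^Suc s)" for x :: 'a
      by (simp add: mult.commute flip: power_mult)
    moreover have "?S^2 + b*?T * (c*?T) = (\<Sum>i<Suc s. b^(2^i) * c^(2^i) * t^(2^Suc s - 2^(i+1)))"
      unfolding diagonal_sum_Suc_char_2[OF char2] by (simp add: power2_eq_square algebra_simps)
    moreover have "a^?n + d^?n = t^?n"
      by (simp add: t_def power_two_power_add_char_2[OF char2])
    ultimately show ?thesis by (simp add: mult.assoc)
  qed
  also have "?T * t^?n = t^(2^Suc s - 1)"
    by (simp add: mult_2 flip: power_add)
  finally show ?case .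
qed

end
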